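(* For every $a>0$, $$\int_{a-i\mathbb R}\mathrm B(z,z)^2\,\mathrm dz=0,$$ where the (not absolutely convergent) integral over the vertical line $\operatorname{Re}z=a$ is understood in the distributional (improper) sense.
   Context: $\mathrm B(z,w)=\Gamma(z)\Gamma(w)/\Gamma(z+w)$ is Euler's beta function. On the line $z=a-ix$, $x\in\mathbb R$, one has $|\mathrm B(z,z)^2|=O(|x|^{-1})$, so the integral converges only conditionally. *)

theory Defs
  imports "HOL-Analysis.Analysis"
begin

end

(*
  Legendre's duplication formula gives B(z,z) = 2^(1-2z) sqrt pi Gamma(z) / Gamma(z + 1/2).
  Applying |w + 1/2|^4 <= (1 + 1/(Re w)^2) |w|^2 |w + 1|^2 to the factors of Euler's product
  for Gamma gives |Gamma(z) / Gamma(z + 1/2)|^4 <= C / |z|^2 uniformly on Re z >= a, hence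
  |B(z,z)^2| <= M 16^(-Re z) / |z| there.

  For any such f, holomorphic on a half-plane with primitive F, the integral over the segment
  from a + iS down to a - iR is F(a - iR) - F(a + iS). Closing the segment into a rectangle whose
  right side lies on Re z = A := a + S + R, the two horizontal sides contribute O(1/S) and O(1/R)
  because the exponential decay makes their length irrelevant, and the right side contributes
  M e^(-cA) (S + R) / A = O(1/R). So the integral tends to 0 as S, R -> infinity independently.
*)
theory Submission
  imports Defs "HOL-Complex_Analysis.Complex_Analysis"
begin

lemma Re_pos_not_nonpos_Ints: "0 < Re z \<Longrightarrow> z \<notin> \<int>\<^sub>\<le>\<^sub>0"
  by (auto elim!: nonpos_Ints_cases simp: complex_eq_iff)

lemma norm_add_half_pow4_le:
  fixes w :: complex
  assumes "0 < Re w"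
  shows "norm (w + 1/2) ^ 4 \<le> (1 + 1 / Re w ^ 2) * (norm w ^ 2 * norm (w + 1) ^ 2)"
proof -
  define x where "x = Re w"
  define r where "r = norm w ^ 2"
  have x: "0 < x" using assms by (simp add: x_def)
  have r: "x ^ 2 \<le> r" by (simp add: r_def x_def cmod_power2)
  have half: "norm (w + 1/2) ^ 2 = r + x + 1/4" and one: "norm (w + 1) ^ 2 = r + 2*x + 1"
    unfolding r_def x_def cmod_power2 by (simp_all add: power2_eq_square algebra_simps)
  have "(x + 1/4) ^ 2 \<le> norm (w + 1) ^ 2"
    using x r unfolding one by (simp add: power2_eq_square algebra_simps)
  also have "\<dots> \<le> r * norm (w + 1) ^ 2 / x ^ 2"
    using x r by (simp add: field_simps mult_right_mono)
  finally have "(x + 1/4) ^ 2 \<le> r * norm (w + 1) ^ 2 / x ^ 2" .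
  moreover have "norm (w + 1/2) ^ 4 = r * norm (w + 1) ^ 2 + (x + 1/4) ^ 2 - r / 2"
  proof -
    have "norm (w + 1/2) ^ 4 = (norm (w + 1/2) ^ 2) ^ 2" by simp
    then show ?thesis unfolding half one by (simp add: power2_eq_square algebra_simps)
  qed
  moreover have "0 \<le> r" by (simp add: r_def)
  ultimately have "norm (w + 1/2) ^ 4 \<le> r * norm (w + 1) ^ 2 + r * norm (w + 1) ^ 2 / x ^ 2"
    by linarith
  also have "\<dots> = (1 + 1 / x ^ 2) * (r * norm (w + 1) ^ 2)"
    by (simp add: distrib_right)
  finally show ?thesis by (simp add: r_def x_def)
qed

lemma norm_pochhammer_add_half_pow4_le_prod:
  fixes z :: complex
  assumes "0 < Re z"
  shows "norm (pochhammer (z + 1/2) n) ^ 4 * norm z ^ 2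
         \<le> (\<Prod>k<n. 1 + 1 / (Re z + real k) ^ 2) * norm (pochhammer z n) ^ 4
           * norm (z + of_nat n) ^ 2"
proof (induction n)
  case 0
  show ?case by simp
next
  case (Suc n)
  define P where "P = (\<Prod>k<n. 1 + 1 / (Re z + real k) ^ 2)"
  have P_nonneg: "0 \<le> P" unfolding P_def by (intro prod_nonneg) simp
  have step: "norm (z + of_nat n + 1/2) ^ 4
      \<le> (1 + 1 / (Re z + real n) ^ 2) * (norm (z + of_nat n) ^ 2 * norm (z + of_nat (Suc n)) ^ 2)"
    using norm_add_half_pow4_le [of "z + of_nat n"] assms by (simp add: add_ac)
  have "norm (pochhammer (z + 1/2) (Suc n)) ^ 4 * norm z ^ 2
      = (norm (pochhammer (z + 1/2) n) ^ 4 * norm z ^ 2) * norm (z + of_nat n + 1/2) ^ 4"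
    by (simp add: pochhammer_Suc norm_mult power_mult_distrib add_ac)
  also have "\<dots> \<le> (P * norm (pochhammer z n) ^ 4 * norm (z + of_nat n) ^ 2)
      * ((1 + 1 / (Re z + real n) ^ 2) * (norm (z + of_nat n) ^ 2 * norm (z + of_nat (Suc n)) ^ 2))"
    by (rule mult_mono [OF Suc.IH [folded P_def] step]) (use P_nonneg in auto)
  also have "\<dots> = (\<Prod>k<Suc n. 1 + 1 / (Re z + real k) ^ 2)
      * norm (pochhammer z (Suc n)) ^ 4 * norm (z + of_nat (Suc n)) ^ 2"
    by (simp add: P_def pochhammer_Suc norm_mult power_mult_distrib)
  finally show ?case .
qed

lemma sum_inverse_square_shift_le:
  fixes s :: real
  assumes "0 < s"
  shows "(\<Sum>k<n. 1 / (s + real k) ^ 2) \<le> 1 / s ^ 2 + 1 / s"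
proof -
  have "(\<Sum>k\<le>m. 1 / (s + real k) ^ 2) \<le> 1 / s ^ 2 + 1 / s - 1 / (s + real m)" for m
  proof (induction m)
    case 0
    show ?case by simp
  next
    case (Suc m)
    define y where "y = s + real m"
    have y: "0 < y" using assms by (simp add: y_def)
    have "1 / (y + 1) ^ 2 \<le> 1 / (y * (y + 1))"
      using y by (intro divide_left_mono) (auto simp: power2_eq_square)
    also have "\<dots> = 1 / y - 1 / (y + 1)"
      using y by (simp add: field_simps)
    finally have "1 / (y + 1) ^ 2 \<le> 1 / y - 1 / (y + 1)" .
    then show ?case using Suc.IH by (simp add: y_def add_ac)
  qed
  note telescoped = this
  have "(\<Sum>k<n. 1 / (s + real k) ^ 2) \<le> (\<Sum>k\<le>n. 1 / (s + real k) ^ 2)"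
    by (intro sum_mono2) auto
  also have "\<dots> \<le> 1 / s ^ 2 + 1 / s - 1 / (s + real n)"
    by (rule telescoped)
  also have "\<dots> \<le> 1 / s ^ 2 + 1 / s"
    using assms by simp
  finally show ?thesis .
qed

lemma norm_pochhammer_add_half_pow4_le:
  fixes z :: complex
  assumes z: "0 < Re z"
  shows "norm (pochhammer (z + 1/2) n) ^ 4 * norm z ^ 2
         \<le> exp (1 / Re z ^ 2 + 1 / Re z) * norm (pochhammer z n) ^ 4 * norm (z + of_nat n) ^ 2"
proof -
  have "(\<Prod>k<n. 1 + 1 / (Re z + real k) ^ 2) \<le> exp (\<Sum>k<n. 1 / (Re z + real k) ^ 2)"
    by (rule prod_le_exp_sum) simp
  also have "\<dots> \<le> exp (1 / Re z ^ 2 + 1 / Re z)"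
    using sum_inverse_square_shift_le [OF z] by simp
  finally have "(\<Prod>k<n. 1 + 1 / (Re z + real k) ^ 2) * norm (pochhammer z n) ^ 4
      * norm (z + of_nat n) ^ 2
      \<le> exp (1 / Re z ^ 2 + 1 / Re z) * norm (pochhammer z n) ^ 4 * norm (z + of_nat n) ^ 2"
    by (intro mult_right_mono) auto
  with norm_pochhammer_add_half_pow4_le_prod [OF z] show ?thesis
    by (rule order.trans)
qed

lemma norm_rGamma_series_add_half_ratio_pow4_le:
  fixes z :: complex
  assumes z: "0 < Re z" and n: "1 \<le> n"
  shows "norm (rGamma_series (z + 1/2) n / rGamma_series z n) ^ 4
         \<le> exp (1 / Re z ^ 2 + 1 / Re z) * (norm (z + of_nat (Suc n)) / real n) ^ 2 / norm z ^ 2"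
proof -
  define w where "w = z + 1/2"
  define L where "L = ln (real n)"
  define E where "E = exp (z * of_real L) / exp (w * of_real L)"
  have pz: "pochhammer z (Suc n) \<noteq> 0"
    using z Re_pos_not_nonpos_Ints pochhammer_eq_0_imp_nonpos_Int by blast
  have "rGamma_series w n / rGamma_series z n = pochhammer w (Suc n) / pochhammer z (Suc n) * E"
    using pz by (simp add: rGamma_series_def L_def E_def field_simps)
  moreover have "norm E ^ 4 = 1 / real n ^ 2"
  proof -
    have "norm E = exp (- L / 2)"
      by (simp add: E_def norm_divide w_def exp_diff [symmetric] field_simps)
    moreover have "exp (- L / 2) ^ 4 = exp (- L) ^ 2"
      by (simp flip: exp_of_nat_mult)
    ultimately show ?thesis using n by (simp add: L_def exp_minus power_divide inverse_eq_divide)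
  qed
  ultimately have ratio: "norm (rGamma_series w n / rGamma_series z n) ^ 4
      = norm (pochhammer w (Suc n)) ^ 4 / (norm (pochhammer z (Suc n)) ^ 4 * real n ^ 2)"
    by (simp only: norm_mult norm_divide power_mult_distrib power_divide) simp
  note poch = norm_pochhammer_add_half_pow4_le [OF z, of "Suc n", folded w_def]
  define D where "D = norm (pochhammer z (Suc n)) ^ 4 * real n ^ 2 * norm z ^ 2"
  have "z \<noteq> 0" using z by auto
  then have D: "0 < D" using pz n by (simp add: D_def)
  have "norm (rGamma_series w n / rGamma_series z n) ^ 4
      = norm (pochhammer w (Suc n)) ^ 4 * norm z ^ 2 / D"
    unfolding ratio D_def using \<open>z \<noteq> 0\<close> by (simp add: field_simps)
  also have "\<dots> \<le> exp (1 / Re z ^ 2 + 1 / Re z) * norm (pochhammer z (Suc n)) ^ 4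
      * norm (z + of_nat (Suc n)) ^ 2 / D"
    using poch D by (simp add: divide_right_mono)
  also have "\<dots> = exp (1 / Re z ^ 2 + 1 / Re z) * (norm (z + of_nat (Suc n)) / real n) ^ 2
      / norm z ^ 2"
    unfolding D_def using pz by (simp add: power_divide field_simps)
  finally show ?thesis by (simp add: w_def)
qed

lemma norm_Gamma_div_Gamma_add_half_pow4_le:
  fixes z :: complex
  assumes z: "0 < Re z"
  shows "norm (Gamma z / Gamma (z + 1/2)) ^ 4 \<le> exp (1 / Re z ^ 2 + 1 / Re z) / norm z ^ 2"
proof -
  define w where "w = z + 1/2"
  define C where "C = exp (1 / Re z ^ 2 + 1 / Re z)"
  have z0: "0 < norm z" using z by auto
  have "(\<lambda>n. norm (rGamma_series w n / rGamma_series z n) ^ 4) \<longlonglongrightarrow> norm (rGamma w / rGamma z) ^ 4"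
    using Re_pos_not_nonpos_Ints [OF z] by (intro tendsto_intros) (simp add: rGamma_eq_zero_iff)
  then have lim: "(\<lambda>n. norm (rGamma_series w n / rGamma_series z n) ^ 4)
      \<longlonglongrightarrow> norm (Gamma z / Gamma w) ^ 4"
    by (simp add: Gamma_def divide_inverse mult.commute)
  have "(\<lambda>n. norm ((z + 1) / of_nat n + 1)) \<longlonglongrightarrow> norm (0 + 1 :: complex)"
    by (intro tendsto_intros)
  moreover have "\<forall>\<^sub>F n in sequentially.
      norm ((z + 1) / of_nat n + 1) = norm (z + of_nat (Suc n)) / real n"
    using eventually_gt_at_top [of 0]
    by eventually_elim (simp add: field_simps norm_divide)
  ultimately have "(\<lambda>n. norm (z + of_nat (Suc n)) / real n) \<longlonglongrightarrow> 1"
    by (simp add: tendsto_cong)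
  then have lim_bound: "(\<lambda>n. C * (norm (z + of_nat (Suc n)) / real n) ^ 2 / norm z ^ 2)
      \<longlonglongrightarrow> C * 1 ^ 2 / norm z ^ 2"
    using z0 by (intro tendsto_intros) auto
  have "\<forall>\<^sub>F n in sequentially. norm (rGamma_series w n / rGamma_series z n) ^ 4
      \<le> C * (norm (z + of_nat (Suc n)) / real n) ^ 2 / norm z ^ 2"
    using eventually_ge_at_top [of 1]
    by eventually_elim (unfold C_def w_def, rule norm_rGamma_series_add_half_ratio_pow4_le [OF z])
  then have "norm (Gamma z / Gamma w) ^ 4 \<le> C * 1 ^ 2 / norm z ^ 2"
    by (rule tendsto_le [OF sequentially_bot lim_bound lim])
  then show ?thesis by (simp add: C_def w_def)
qed

lemma Beta_diag_eq_Gamma_div_Gamma_add_half: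
  fixes z :: complex
  assumes "z \<notin> \<int>\<^sub>\<le>\<^sub>0" "z + 1/2 \<notin> \<int>\<^sub>\<le>\<^sub>0"
  shows "Beta z z
    = exp ((1 - 2*z) * of_real (ln 2)) * of_real (sqrt pi) * (Gamma z / Gamma (z + 1/2))"
proof -
  note duplication = Gamma_legendre_duplication [OF assms]
  have G: "Gamma z \<noteq> 0" "Gamma (z + 1/2) \<noteq> 0"
    using assms by (simp_all add: Gamma_eq_zero_iff)
  have G2: "Gamma (2 * z) \<noteq> 0"
  proof
    assume "Gamma (2 * z) = 0"
    then have "Gamma z * Gamma (z + 1/2) = 0" by (simp only: duplication mult_zero_right)
    with G show False by simp
  qed
  have cancel: "a * a / c = a / b * (a * b / c)" if "b \<noteq> 0" for a b c :: complex
    using that by simp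
  have "z + z = 2 * z" by simp
  then have "Beta z z = Gamma z / Gamma (z + 1/2) * (Gamma z * Gamma (z + 1/2) / Gamma (2 * z))"
    unfolding Beta_def using G(2) by (simp only: cancel)
  also have "Gamma z * Gamma (z + 1/2) / Gamma (2 * z)
      = exp ((1 - 2*z) * of_real (ln 2)) * of_real (sqrt pi)"
    unfolding duplication using G2 by (rule nonzero_mult_div_cancel_right)
  finally show ?thesis by (simp only: mult.commute)
qed

lemma norm_Beta_diag_power2_le:
  fixes z :: complex
  assumes a: "0 < a" and z: "a \<le> Re z"
  shows "norm (Beta z z ^ 2)
    \<le> 4 * pi * exp ((1 / a ^ 2 + 1 / a) / 2) * exp (- (4 * ln 2) * Re z) / norm z"
proof -
  define Q where "Q = Gamma z / Gamma (z + 1/2)"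
  have z_pos: "0 < Re z" using a z by linarith
  have nonpos: "z \<notin> \<int>\<^sub>\<le>\<^sub>0" "z + 1/2 \<notin> \<int>\<^sub>\<le>\<^sub>0"
    using z_pos by (simp_all add: Re_pos_not_nonpos_Ints)
  have "norm (exp ((1 - 2*z) * of_real (ln 2))) ^ 2 = exp (2 * ((1 - 2 * Re z) * ln 2))"
    by (simp flip: exp_of_nat_mult)
  also have "2 * ((1 - 2 * Re z) * ln 2) = ln 2 + ln 2 + (- (4 * ln 2) * Re z)"
    by (simp add: algebra_simps)
  also have "exp \<dots> = 4 * exp (- (4 * ln 2) * Re z)"
    by (simp only: exp_add) simp
  finally have norm_exp:
    "norm (exp ((1 - 2*z) * of_real (ln 2))) ^ 2 = 4 * exp (- (4 * ln 2) * Re z)" .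
  have "(norm Q ^ 2) ^ 2 \<le> exp (1 / Re z ^ 2 + 1 / Re z) / norm z ^ 2"
    using norm_Gamma_div_Gamma_add_half_pow4_le [OF z_pos] by (simp add: Q_def)
  also have "\<dots> \<le> exp (1 / a ^ 2 + 1 / a) / norm z ^ 2"
  proof -
    have "1 / Re z ^ 2 \<le> 1 / a ^ 2" "1 / Re z \<le> 1 / a"
      using a z by (auto intro!: divide_left_mono power_mono)
    then show ?thesis by (intro divide_right_mono) auto
  qed
  also have "\<dots> = (exp ((1 / a ^ 2 + 1 / a) / 2) / norm z) ^ 2"
    by (simp add: power_divide flip: exp_of_nat_mult)
  finally have norm_Q: "norm Q ^ 2 \<le> exp ((1 / a ^ 2 + 1 / a) / 2) / norm z"
    by (rule power2_le_imp_le) simp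
  have rearrange: "4 * x * pi * (y / r) = 4 * pi * y * x / r" for x y r :: real
    by simp
  have "norm (Beta z z ^ 2) = norm (exp ((1 - 2*z) * of_real (ln 2))) ^ 2 * pi * norm Q ^ 2"
    unfolding Beta_diag_eq_Gamma_div_Gamma_add_half [OF nonpos, folded Q_def]
      norm_power norm_mult power_mult_distrib by simp
  also have "\<dots> \<le> 4 * exp (- (4 * ln 2) * Re z) * pi * (exp ((1 / a ^ 2 + 1 / a) / 2) / norm z)"
    unfolding norm_exp by (rule mult_left_mono [OF norm_Q]) simp
  also have "\<dots> = 4 * pi * exp ((1 / a ^ 2 + 1 / a) / 2) * exp (- (4 * ln 2) * Re z) / norm z"
    by (rule rearrange)
  finally show ?thesis .
qed

lemma has_vector_derivative_Complex:
  assumes "(f has_real_derivative f') (at s within S)" "(g has_real_derivative g') (at s within S)"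
  shows "((\<lambda>s. Complex (f s) (g s)) has_vector_derivative Complex f' g') (at s within S)"
proof -
  have "((\<lambda>s. of_real (f s) + \<i> * of_real (g s)) has_vector_derivative of_real f' + \<i> * of_real g')
      (at s within S)"
    using assms by (auto intro!: derivative_eq_intros)
  then show ?thesis by (simp add: Complex_eq)
qed

lemma has_integral_primitive_along_path:
  fixes F f :: "complex \<Rightarrow> complex" and g :: "real \<Rightarrow> complex"
  assumes "u \<le> v"
    and "\<And>s. s \<in> {u..v} \<Longrightarrow> (g has_vector_derivative g' s) (at s)"
    and "\<And>s. s \<in> {u..v} \<Longrightarrow> (F has_field_derivative f (g s)) (at (g s))"
  shows "((\<lambda>s. f (g s) * g' s) has_integral F (g v) - F (g u)) {u..v}"
proof -
  have "((\<lambda>s. g' s * f (g s)) has_integral (F \<circ> g) v - (F \<circ> g) u) {u..v}"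
  proof (rule fundamental_theorem_of_calculus [OF assms(1)])
    fix s assume s: "s \<in> {u..v}"
    have "((F \<circ> g) has_vector_derivative g' s * f (g s)) (at s)"
      by (rule field_vector_diff_chain_at [OF assms(2,3) [OF s]])
    then show "((F \<circ> g) has_vector_derivative g' s * f (g s)) (at s within {u..v})"
      by (rule has_vector_derivative_at_within)
  qed
  then show ?thesis by (simp add: mult.commute)
qed

lemma has_integral_exp_neg:
  fixes c :: real
  assumes "0 < c" "a \<le> b"
  shows "((\<lambda>s. exp (- c * s)) has_integral (exp (- c * a) - exp (- c * b)) / c) {a..b}"
proof -
  have "((\<lambda>s. exp (- c * s)) has_integral - exp (- c * b) / c - - exp (- c * a) / c) {a..b}"
    using assms by (intro fundamental_theorem_of_calculus)
      (auto intro!: derivative_eq_intros simp flip: has_real_derivative_iff_has_vector_derivative)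
  then show ?thesis by (simp add: diff_divide_distrib)
qed

lemma exp_neg_le_inverse:
  fixes x :: real
  assumes "0 < x"
  shows "exp (- x) \<le> 1 / x"
proof -
  have "x \<le> exp x" using exp_ge_add_one_self [of x] by linarith
  then have "1 / exp x \<le> 1 / x" using assms by (intro divide_left_mono) auto
  then show ?thesis by (simp add: exp_minus inverse_eq_divide)
qed

locale primitive_with_exp_decay =
  fixes f F :: "complex \<Rightarrow> complex" and a c M :: real
  assumes a_pos: "0 < a" and c_pos: "0 < c"
    and primitive: "\<And>z. a \<le> Re z \<Longrightarrow> (F has_field_derivative f z) (at z)"
    and decay: "\<And>z. a \<le> Re z \<Longrightarrow> norm (f z) \<le> M * exp (- c * Re z) / norm z"
begin

lemma M_nonneg: "0 \<le> M"
proof -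
  have "0 \<le> norm (f (of_real a))" by simp
  also have "\<dots> \<le> M * exp (- c * a) / a"
    using decay [of "of_real a"] a_pos by simp
  finally show ?thesis using a_pos by (simp add: zero_le_divide_iff zero_le_mult_iff)
qed

lemma horizontal_increment_le:
  assumes T: "T \<noteq> 0" and A: "a \<le> A"
  shows "norm (F (Complex A T) - F (Complex a T)) \<le> M / (c * \<bar>T\<bar>)"
proof -
  have "((\<lambda>s. f (Complex s T) * Complex 1 0) has_integral F (Complex A T) - F (Complex a T)) {a..A}"
    using A by (intro has_integral_primitive_along_path has_vector_derivative_Complex
        derivative_eq_intros primitive) auto
  then have F_int: "((\<lambda>s. f (Complex s T)) has_integral F (Complex A T) - F (Complex a T)) {a..A}"
    by (simp add: Complex_eq)
  have exp_int: "((\<lambda>s. M / \<bar>T\<bar> * exp (- c * s)) has_integral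
      M / \<bar>T\<bar> * ((exp (- c * a) - exp (- c * A)) / c)) {a..A}"
    using c_pos A by (intro has_integral_mult_right has_integral_exp_neg)
  have "norm (f (Complex s T)) \<le> M / \<bar>T\<bar> * exp (- c * s)" if "s \<in> {a..A}" for s
  proof -
    have "norm (f (Complex s T)) \<le> M * exp (- c * s) / norm (Complex s T)"
      using decay [of "Complex s T"] that by simp
    also have "\<dots> \<le> M * exp (- c * s) / \<bar>T\<bar>"
    proof (rule divide_left_mono)
      show "\<bar>T\<bar> \<le> norm (Complex s T)" using abs_Im_le_cmod [of "Complex s T"] by simp
      moreover have "0 < \<bar>T\<bar>" using T by simp
      ultimately show "0 < norm (Complex s T) * \<bar>T\<bar>" by (intro mult_pos_pos) linarith+
    qed (use M_nonneg in simp)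
    finally show ?thesis by simp
  qed
  then have "norm (F (Complex A T) - F (Complex a T))
      \<le> M / \<bar>T\<bar> * ((exp (- c * a) - exp (- c * A)) / c)"
    using has_integral_norm_bound_integral_component [OF F_int exp_int, of 1] by simp
  also have "\<dots> \<le> M / \<bar>T\<bar> * (1 / c)"
  proof (intro mult_left_mono divide_right_mono)
    show "exp (- c * a) - exp (- c * A) \<le> 1"
    proof -
      have "exp (- c * a) \<le> 1" using a_pos c_pos by simp
      moreover have "0 < exp (- c * A)" by simp
      ultimately show ?thesis by linarith
    qed
  qed (use M_nonneg c_pos in simp_all)
  finally show ?thesis by (simp add: mult.commute)
qed

lemma vertical_increment_le:
  assumes A: "a \<le> A" and uv: "u \<le> v"
  shows "norm (F (Complex A v) - F (Complex A u)) \<le> M * exp (- c * A) / A * (v - u)"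
proof -
  have A_pos: "0 < A" using a_pos A by linarith
  have "((\<lambda>t. f (Complex A t) * Complex 0 1) has_integral F (Complex A v) - F (Complex A u)) {u..v}"
    using A uv by (intro has_integral_primitive_along_path has_vector_derivative_Complex
        derivative_eq_intros primitive) auto
  then have F_int:
    "((\<lambda>t. f (Complex A t) * \<i>) has_integral F (Complex A v) - F (Complex A u)) {u..v}"
    by (simp add: Complex_eq)
  have bound: "norm (f (Complex A t) * \<i>) \<le> M * exp (- c * A) / A" if "t \<in> {u..v} - {}" for t
  proof -
    have "norm (f (Complex A t) * \<i>) \<le> M * exp (- c * A) / norm (Complex A t)"
      using decay [of "Complex A t"] A by (simp add: norm_mult)
    also have "\<dots> \<le> M * exp (- c * A) / A"
    proof (rule divide_left_mono)
      show "A \<le> norm (Complex A t)" using abs_Re_le_cmod [of "Complex A t"] by simp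
      with A_pos show "0 < norm (Complex A t) * A" by (intro mult_pos_pos) linarith+
    qed (use M_nonneg in simp)
    finally show ?thesis .
  qed
  have "0 \<le> M * exp (- c * A) / A" using M_nonneg A_pos by simp
  from has_integral_bound_real [OF this finite.emptyI F_int bound] show ?thesis
    using uv by simp
qed


lemma increment_on_line_le:
  assumes S: "0 < S" and R: "0 < R"
  shows "norm (F (Complex a (- R)) - F (Complex a S)) \<le> M / (c * S) + 2 * M / (c * R)"
proof -
  define A where "A = a + S + R"
  have aA: "a \<le> A" and A_pos: "0 < A" using a_pos S R by (simp_all add: A_def)
  \<comment> \<open>close the segment into the boundary of the rectangle \<open>[a, A] \<times> [-R, S]\<close>\<close>
  have "F (Complex a (- R)) - F (Complex a S)
      = (F (Complex A S) - F (Complex a S)) - (F (Complex A (- R)) - F (Complex a (- R)))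
        - (F (Complex A S) - F (Complex A (- R)))"
    by simp
  then have "norm (F (Complex a (- R)) - F (Complex a S))
      \<le> norm (F (Complex A S) - F (Complex a S)) + norm (F (Complex A (- R)) - F (Complex a (- R)))
        + norm (F (Complex A S) - F (Complex A (- R)))"
    by (metis norm_triangle_ineq4 add_right_mono order_trans)
  also have "\<dots> \<le> M / (c * S) + M / (c * R) + M * exp (- c * A) / A * (S - - R)"
  proof (intro add_mono)
    show "norm (F (Complex A S) - F (Complex a S)) \<le> M / (c * S)"
      using horizontal_increment_le [of S A] S aA by simp
    show "norm (F (Complex A (- R)) - F (Complex a (- R))) \<le> M / (c * R)"
      using horizontal_increment_le [of "- R" A] R aA by simp
    show "norm (F (Complex A S) - F (Complex A (- R))) \<le> M * exp (- c * A) / A * (S - - R)"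
      using vertical_increment_le [OF aA, of "- R" S] S R by simp
  qed
  also have "M * exp (- c * A) / A * (S - - R) \<le> M / (c * R)"
  proof -
    have "exp (- c * A) * ((S + R) / A) \<le> 1 / (c * A) * 1"
      using exp_neg_le_inverse [of "c * A"] c_pos A_pos a_pos S R
      by (intro mult_mono) (auto simp: A_def)
    also have "\<dots> \<le> 1 / (c * R)"
      unfolding mult_1_right using c_pos R a_pos S
      by (intro divide_left_mono mult_left_mono) (auto simp: A_def)
    finally have "M * (exp (- c * A) * ((S + R) / A)) \<le> M * (1 / (c * R))"
      by (rule mult_left_mono [OF _ M_nonneg])
    then show ?thesis by simp
  qed
  finally show ?thesis by (simp add: ac_simps)
qed

lemma increment_on_line_tendsto_0:
  "((\<lambda>(S, R). F (Complex a (- R)) - F (Complex a S)) \<longlongrightarrow> 0) (at_top \<times>\<^sub>F at_top)"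
proof (rule Lim_null_comparison [where g = "\<lambda>p. M / (c * fst p) + 2 * M / (c * snd p)"])
  show "\<forall>\<^sub>F p in at_top \<times>\<^sub>F at_top. norm ((\<lambda>(S, R). F (Complex a (- R)) - F (Complex a S)) p)
      \<le> M / (c * fst p) + 2 * M / (c * snd p)"
    using eventually_prodI [OF eventually_gt_at_top [of 0] eventually_gt_at_top [of 0]]
    by eventually_elim (auto simp: increment_on_line_le)
  have "((\<lambda>p. M / c * inverse (fst p) + 2 * M / c * inverse (snd p)) \<longlongrightarrow> M / c * 0 + 2 * M / c * 0)
      (at_top \<times>\<^sub>F at_top)"
    by (intro tendsto_intros tendsto_inverse_0_at_top filterlim_fst filterlim_snd)
  then show "((\<lambda>p. M / (c * fst p) + 2 * M / (c * snd p)) \<longlongrightarrow> 0) (at_top \<times>\<^sub>F at_top)"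
    by (simp add: field_simps)
qed

lemma has_integral_on_line:
  assumes "- S \<le> R"
  shows "((\<lambda>x. f (Complex a (- x)) * (- \<i>)) has_integral
    F (Complex a (- R)) - F (Complex a S)) {- S..R}"
proof -
  have "((\<lambda>x. f (Complex a (- x)) * Complex 0 (- 1)) has_integral
      F (Complex a (- R)) - F (Complex a (- (- S)))) {- S..R}"
    using assms by (intro has_integral_primitive_along_path has_vector_derivative_Complex
        derivative_eq_intros primitive) auto
  then show ?thesis by (simp add: Complex_eq)
qed

end

lemma vertical_line_integral_tendsto_0:
  fixes f :: "complex \<Rightarrow> complex"
  assumes holo: "f holomorphic_on {z. b < Re z}" and "b < a" "0 < a" "0 < c"
    and "\<And>z. a \<le> Re z \<Longrightarrow> norm (f z) \<le> M * exp (- c * Re z) / norm z"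
  shows "(\<forall>S R. (\<lambda>x::real. f (Complex a (- x)) * (- \<i>)) integrable_on {-S..R})
       \<and> ((\<lambda>(S, R). integral {-S..R} (\<lambda>x::real. f (Complex a (- x)) * (- \<i>)))
            \<longlongrightarrow> 0) (at_top \<times>\<^sub>F at_top)"
proof -
  obtain F where F:
    "\<And>z. z \<in> {z. b < Re z} \<Longrightarrow> (F has_field_derivative f z) (at z within {z. b < Re z})"
    using holomorphic_convex_primitive' [OF convex_halfspace_Re_gt open_halfspace_Re_gt holo]
    by blast
  have "(F has_field_derivative f z) (at z)" if "a \<le> Re z" for z
    using F [of z] that \<open>b < a\<close> at_within_open [OF _ open_halfspace_Re_gt] by fastforce
  then interpret primitive_with_exp_decay f F a c M
    using assms by unfold_locales auto
  have "(\<lambda>x. f (Complex a (- x)) * (- \<i>)) integrable_on {-S..R}" for S R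
    using has_integral_on_line [of S R] by (cases "- S \<le> R") auto
  moreover have "((\<lambda>(S, R). integral {-S..R} (\<lambda>x. f (Complex a (- x)) * (- \<i>))) \<longlongrightarrow> 0)
      (at_top \<times>\<^sub>F at_top)"
  proof (rule Lim_transform_eventually [OF increment_on_line_tendsto_0])
    have integral_eq: "F (Complex a (- R)) - F (Complex a S)
        = integral {-S..R} (\<lambda>x. f (Complex a (- x)) * (- \<i>))"
      if "0 \<le> S" "0 \<le> R" for S R
      using that by (intro integral_unique [symmetric] has_integral_on_line) simp
    show "\<forall>\<^sub>F p in at_top \<times>\<^sub>F at_top. (\<lambda>(S, R). F (Complex a (- R)) - F (Complex a S)) p
        = (\<lambda>(S, R). integral {-S..R} (\<lambda>x. f (Complex a (- x)) * (- \<i>))) p"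
      using eventually_prodI [OF eventually_ge_at_top [of 0] eventually_ge_at_top [of 0]]
      by eventually_elim (simp add: case_prod_beta integral_eq)
  qed
  ultimately show ?thesis by blast
qed

theorem lemma9p2:
  fixes a :: real
  assumes "a > 0"
  shows "(\<forall>S R. (\<lambda>x::real. Beta (Complex a (- x)) (Complex a (- x)) ^ 2 * (- \<i>))
                     integrable_on {-S..R})
       \<and> ((\<lambda>(S, R). integral {-S..R}
              (\<lambda>x::real. Beta (Complex a (- x)) (Complex a (- x)) ^ 2 * (- \<i>)))
            \<longlongrightarrow> (0::complex)) (at_top \<times>\<^sub>F at_top)"
proof (rule vertical_line_integral_tendsto_0)
  show "(\<lambda>z. Beta z z ^ 2) holomorphic_on {z. 0 < Re z}"
    by (intro holomorphic_intros) (auto dest: Re_pos_not_nonpos_Ints)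
  show "norm (Beta z z ^ 2)
      \<le> 4 * pi * exp ((1 / a ^ 2 + 1 / a) / 2) * exp (- (4 * ln 2) * Re z) / norm z"
    if "a \<le> Re z" for z
    using norm_Beta_diag_power2_le [OF assms that] .
qed (use assms in auto)

end
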